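(* Let $q\ge 2$ and $n\ge 1$ be integers and let $\boldsymbol{x}\neq\boldsymbol{y}\in\Sigma_q^n$. Then $d_H(\mathcal{R}(\boldsymbol{x}),\mathcal{R}(\boldsymbol{y}))=2$ if and only if there exist sequences $\boldsymbol{u},\boldsymbol{v}\in\Sigma_q^{\ge 0}$, two distinct symbols $a,b\in\Sigma_q$ and an integer $t\ge 1$ such that $$\boldsymbol{x}=(\boldsymbol{u},\boldsymbol{\alpha}_t(ab),\boldsymbol{v}),\qquad \boldsymbol{y}=(\boldsymbol{u},\boldsymbol{\alpha}_t(ba),\boldsymbol{v}).$$
   Context: $\Sigma_q=\{0,1,\dots,q-1\}$; $\Sigma_q^{\ge 0}$ is the set of all finite sequences over $\Sigma_q$, including the empty one; $(\cdot,\cdot)$ denotes concatenation. For $\boldsymbol{x}\in\Sigma_q^n$, $x[i]$ is its $i$-th entry, with the convention $x[i]=0$ for $i\notin[1,n]$; $\boldsymbol{x}[i,j]=(x[i],\dots,x[j])$. The $2$-read vector of $\boldsymbol{x}$ is $\mathcal{R}(\boldsymbol{x})=(c(\boldsymbol{x}[0,1]),c(\boldsymbol{x}[1,2]),\dots,c(\boldsymbol{x}[n,n+1]))$, a vector of length $n+1$ whose $i$-th entry is the multiset $\{\{x[i-1],x[i]\}\}$. $d_H$ denotes Hamming distance (number of positions where entries differ). For distinct $a,b$ and $t\ge 0$, $\boldsymbol{\alpha}_t(ab)$ is the alternating sequence $abab\cdots$ of length $t$, i.e. $(ab)^{t/2}$ if $t$ is even and $(ab)^{(t-1)/2}a$ if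 $t$ is odd. *)

theory Defs
  imports Main "HOL-Library.Multiset"
begin

definition entry :: "nat list \<Rightarrow> nat \<Rightarrow> nat" where
  "entry x i = (if 1 \<le> i \<and> i \<le> length x then x ! (i - 1) else 0)"

definition read2 :: "nat list \<Rightarrow> nat multiset list" where
  "read2 x = map (\<lambda>i. {# entry x (i - 1), entry x i #}) [1..<length x + 2]"

definition hamming :: "'a list \<Rightarrow> 'a list \<Rightarrow> nat" where
  "hamming xs ys = card {i. i < length xs \<and> xs ! i \<noteq> ys ! i}"

definition alt :: "nat \<Rightarrow> 'a \<Rightarrow> 'a \<Rightarrow> 'a list" where
  "alt t a b = map (\<lambda>i. if even i then a else b) [0..<t]"

end

theory Submission
  imports Defs
begin

text \<open>Since \<open>{#c, p#} = {#c, p'#}\<close> iff \<open>p = p'\<close>, a common prefix or suffix of \<open>x\<close> and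
  \<open>y\<close> does not change the number of differing reads, so we may assume that \<open>x\<close> and \<open>y\<close>
  differ in their first and in their last symbol. Then the first and the last read differ, and
  the distance is 2 exactly when all reads in between agree. Starting from \<open>x\<^sub>1 = a \<noteq> b = y\<^sub>1\<close>,
  the equation \<open>{#a, x\<^sub>2#} = {#b, y\<^sub>2#}\<close> forces \<open>x\<^sub>2 = b\<close> and \<open>y\<^sub>2 = a\<close>, and so on: the
  interior reads agree exactly when \<open>x = abab\<dots>\<close> and \<open>y = baba\<dots>\<close>.\<close>

lemma hamming_conv_filter_zip:
  "length xs = length ys \<Longrightarrow> hamming xs ys = length (filter (\<lambda>(a, b). a \<noteq> b) (zip xs ys))"
  by (simp add: hamming_def length_filter_conv_card cong: conj_cong)

lemma hamming_Nil [simp]: "hamming [] ys = 0"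
  by (simp add: hamming_def)

lemma hamming_Cons:
  "length xs = length ys \<Longrightarrow> hamming (a # xs) (b # ys) = (if a = b then 0 else 1) + hamming xs ys"
  by (simp add: hamming_conv_filter_zip)

lemma hamming_append:
  "length xs = length ys \<Longrightarrow> length xs' = length ys' \<Longrightarrow>
   hamming (xs @ xs') (ys @ ys') = hamming xs ys + hamming xs' ys'"
  by (simp add: hamming_conv_filter_zip)

lemma hamming_rev:
  "length xs = length ys \<Longrightarrow> hamming (rev xs) (rev ys) = hamming xs ys"
  by (simp add: hamming_conv_filter_zip zip_rev) (metis length_rev rev_filter)

lemma hamming_eq_0_iff:
  "length xs = length ys \<Longrightarrow> hamming xs ys = 0 \<longleftrightarrow> xs = ys"
  by (induction xs ys rule: list_induct2) (simp_all add: hamming_Cons)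

fun adj_pairs :: "'a list \<Rightarrow> 'a multiset list" where
  "adj_pairs (a # b # w) = {#a, b#} # adj_pairs (b # w)"
| "adj_pairs _ = []"

lemma length_adj_pairs [simp]: "length (adj_pairs w) = length w - 1"
  by (induction w rule: adj_pairs.induct) auto

lemma nth_adj_pairs: "Suc i < length w \<Longrightarrow> adj_pairs w ! i = {#w ! i, w ! Suc i#}"
  by (induction w arbitrary: i rule: adj_pairs.induct) (auto simp: nth_Cons split: nat.split)

lemma adj_pairs_snoc: "w \<noteq> [] \<Longrightarrow> adj_pairs (w @ [c]) = adj_pairs w @ [{#last w, c#}]"
  by (induction w rule: adj_pairs.induct) auto

lemma adj_pairs_rev: "adj_pairs (rev w) = rev (adj_pairs w)"
proof (induction w rule: adj_pairs.induct)
  case (1 a b w)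
  have "adj_pairs (rev w @ [b, a]) = adj_pairs (rev w @ [b]) @ [{#b, a#}]"
    using adj_pairs_snoc[of "rev w @ [b]" a] by simp
  with 1 show ?case by (simp add: add_mset_commute)
qed auto

lemma read2_eq_adj_pairs: "read2 x = adj_pairs (0 # x @ [0])"
proof (rule nth_equalityI)
  show "length (read2 x) = length (adj_pairs (0 # x @ [0]))"
    by (simp add: read2_def del: upt_Suc)
  fix i assume "i < length (read2 x)"
  then have "i \<le> length x" by (simp add: read2_def del: upt_Suc)
  moreover have "entry x j = (0 # x @ [0]) ! j" if "j \<le> Suc (length x)" for j
    using that by (auto simp: entry_def nth_Cons nth_append split: nat.split)
  ultimately show "read2 x ! i = adj_pairs (0 # x @ [0]) ! i"
    by (simp add: read2_def nth_adj_pairs del: upt_Suc)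
qed

lemma length_read2 [simp]: "length (read2 x) = Suc (length x)"
  by (simp add: read2_def del: upt_Suc)

lemma read2_rev: "read2 (rev x) = rev (read2 x)"
  using adj_pairs_rev[of "0 # x @ [0]"] by (simp add: read2_eq_adj_pairs)

lemma hamming_adj_pairs_Cons_Cons:
  assumes "length x = length y"
  shows "hamming (adj_pairs (c # x)) (adj_pairs (c # y)) = hamming (adj_pairs (d # x)) (adj_pairs (d # y))"
  using assms by (cases x; cases y) (simp_all add: hamming_Cons)

lemma hamming_read2_Cons:
  "length x = length y \<Longrightarrow> hamming (read2 (c # x)) (read2 (c # y)) = hamming (read2 x) (read2 y)"
  using hamming_adj_pairs_Cons_Cons[of "x @ [0]" "y @ [0]" c 0]
  by (simp add: read2_eq_adj_pairs hamming_Cons)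

lemma hamming_read2_snoc:
  assumes "length x = length y"
  shows "hamming (read2 (x @ [c])) (read2 (y @ [c])) = hamming (read2 x) (read2 y)"
proof -
  have "hamming (read2 (x @ [c])) (read2 (y @ [c])) = hamming (read2 (c # rev x)) (read2 (c # rev y))"
    using assms hamming_rev[of "read2 (x @ [c])" "read2 (y @ [c])"] by (simp add: read2_rev[symmetric])
  also have "\<dots> = hamming (read2 (rev x)) (read2 (rev y))"
    using assms by (simp add: hamming_read2_Cons)
  also have "\<dots> = hamming (read2 x) (read2 y)"
    using assms hamming_rev[of "read2 x" "read2 y"] by (simp add: read2_rev)
  finally show ?thesis .
qed

lemma hamming_read2_append_common:
  assumes "length x = length y"
  shows "hamming (read2 (u @ x @ v)) (read2 (u @ y @ v)) = hamming (read2 x) (read2 y)"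
proof -
  have "hamming (read2 (x @ v)) (read2 (y @ v)) = hamming (read2 x) (read2 y)"
  proof (induction v rule: rev_induct)
    case (snoc c v)
    then show ?case
      using assms hamming_read2_snoc[of "x @ v" "y @ v" c] by simp
  qed simp
  moreover have "hamming (read2 (u @ w)) (read2 (u @ w')) = hamming (read2 w) (read2 w')"
    if "length w = length w'" for w w' :: "nat list"
    using that by (induction u) (simp_all add: hamming_read2_Cons)
  ultimately show ?thesis
    using assms by simp
qed

lemma mset_pair_eq_swap_iff: "a \<noteq> b \<Longrightarrow> {#a, c#} = {#b, d#} \<longleftrightarrow> c = b \<and> d = a"
  by (auto simp: add_eq_conv_ex)

lemma length_alt [simp]: "length (alt t a b) = t"
  by (simp add: alt_def)

lemma alt_Suc: "alt (Suc t) a b = a # alt t b a"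
  by (rule nth_equalityI) (auto simp: alt_def nth_Cons simp del: upt_Suc split: nat.split)

lemma adj_pairs_eq_iff_alt:
  assumes "length w = length w'" and "a \<noteq> b"
  shows "adj_pairs (a # w) = adj_pairs (b # w') \<longleftrightarrow>
    w = alt (length w) b a \<and> w' = alt (length w) a b"
  using assms
proof (induction w w' arbitrary: a b rule: list_induct2)
  case Nil
  then show ?case by (simp add: alt_def)
next
  case (Cons c w d w')
  then show ?case by (auto simp: mset_pair_eq_swap_iff alt_Suc)
qed

lemma read2_conv_adj_pairs:
  "x \<noteq> [] \<Longrightarrow> read2 x = {#0, hd x#} # adj_pairs x @ [{#last x, 0#}]"
  using adj_pairs_snoc[of x 0] by (cases x) (simp_all add: read2_eq_adj_pairs)

lemma hamming_read2_conv_adj_pairs: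
  assumes "length x = length y" and "x \<noteq> []" and "hd x \<noteq> hd y" and "last x \<noteq> last y"
  shows "hamming (read2 x) (read2 y) = hamming (adj_pairs x) (adj_pairs y) + 2"
proof -
  have "y \<noteq> []" using assms(1,2) by auto
  then show ?thesis
    using assms by (simp add: read2_conv_adj_pairs hamming_Cons hamming_append)
qed

lemma split_common_prefix_suffix:
  assumes "length x = length y" and "x \<noteq> y"
  obtains u v x' y' where "x = u @ x' @ v" and "y = u @ y' @ v" and "length x' = length y'"
    and "x' \<noteq> []" and "hd x' \<noteq> hd y'" and "last x' \<noteq> last y'"
proof -
  obtain u x1 y1 where x: "x = u @ x1" and y: "y = u @ y1"
    and x1y1: "x1 = [] \<or> y1 = [] \<or> hd x1 \<noteq> hd y1"
    using longest_common_prefix by blast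
  have len1: "length x1 = length y1" using assms(1) x y by simp
  with x1y1 assms(2) x y have "x1 \<noteq> []" "y1 \<noteq> []" "hd x1 \<noteq> hd y1" by auto
  obtain x' y' v where x1: "x1 = x' @ v" and y1: "y1 = y' @ v"
    and x'y': "x' = [] \<or> y' = [] \<or> last x' \<noteq> last y'"
    using longest_common_suffix by blast
  have "length x' = length y'" using len1 x1 y1 by simp
  moreover have "x' \<noteq> []" "y' \<noteq> []" using calculation x1 y1 \<open>hd x1 \<noteq> hd y1\<close> by auto
  ultimately show thesis
    using that[of u x' v y'] x y x1 y1 x'y' \<open>hd x1 \<noteq> hd y1\<close> by simp
qed

lemma hamming_read2_swap_alt:
  assumes "a \<noteq> b" and "t \<ge> 1"
  shows "hamming (read2 (u @ alt t a b @ v)) (read2 (u @ alt t b a @ v)) = 2"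
proof -
  obtain k where t: "t = Suc k" using assms(2) by (cases t) simp_all
  let ?x = "alt t a b" and ?y = "alt t b a"
  have "hamming (read2 (u @ ?x @ v)) (read2 (u @ ?y @ v)) = hamming (read2 ?x) (read2 ?y)"
    by (simp add: hamming_read2_append_common)
  also have "\<dots> = hamming (adj_pairs ?x) (adj_pairs ?y) + 2"
  proof (rule hamming_read2_conv_adj_pairs)
    show "last ?x \<noteq> last ?y"
      using assms by (simp add: alt_def last_map del: upt_Suc)
  qed (simp_all add: t alt_Suc \<open>a \<noteq> b\<close>)
  also have "adj_pairs ?x = adj_pairs ?y"
    using adj_pairs_eq_iff_alt[of "alt k b a" "alt k a b" a b] assms(1) by (simp add: t alt_Suc)
  finally show ?thesis
    by (simp add: hamming_eq_0_iff)
qed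

lemma hamming_read2_eq_2E:
  assumes "length x = length y" and "x \<noteq> y" and "hamming (read2 x) (read2 y) = 2"
  obtains u v a b t where "a \<noteq> b" and "t \<ge> 1"
    and "x = u @ alt t a b @ v" and "y = u @ alt t b a @ v"
proof -
  obtain u v x' y' where x: "x = u @ x' @ v" and y: "y = u @ y' @ v"
    and len: "length x' = length y'" and "x' \<noteq> []" and "hd x' \<noteq> hd y'" and "last x' \<noteq> last y'"
    using assms(1,2) by (rule split_common_prefix_suffix)
  then obtain a w b w' where x': "x' = a # w" and y': "y' = b # w'" and "a \<noteq> b"
    by (cases x'; cases y') auto
  have "hamming (adj_pairs x') (adj_pairs y') + 2 = 2"
    using assms(3) hamming_read2_append_common[OF len, of u v]
      hamming_read2_conv_adj_pairs[OF len] \<open>x' \<noteq> []\<close> \<open>hd x' \<noteq> hd y'\<close> \<open>last x' \<noteq> last y'\<close>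
    by (simp add: x y)
  then have "adj_pairs (a # w) = adj_pairs (b # w')"
    using hamming_eq_0_iff[of "adj_pairs x'" "adj_pairs y'"] len by (simp add: x' y')
  then have "x' = alt (Suc (length w)) a b" and "y' = alt (Suc (length w)) b a"
    using adj_pairs_eq_iff_alt[of w w' a b] len \<open>a \<noteq> b\<close> by (simp_all add: x' y' alt_Suc)
  with x y \<open>a \<noteq> b\<close> show thesis
    by (intro that) simp_all
qed

theorem theorem1:
  fixes q n :: nat and x y :: "nat list"
  assumes "q \<ge> 2" and "n \<ge> 1"
    and "length x = n" and "length y = n"
    and "set x \<subseteq> {0..<q}" and "set y \<subseteq> {0..<q}"
    and "x \<noteq> y"
  shows "hamming (read2 x) (read2 y) = 2 \<longleftrightarrow>
    (\<exists>u v a b t. set u \<subseteq> {0..<q} \<and> set v \<subseteq> {0..<q} \<and>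
       a < q \<and> b < q \<and> a \<noteq> b \<and> t \<ge> 1 \<and>
       x = u @ alt t a b @ v \<and> y = u @ alt t b a @ v)"
proof
  assume "hamming (read2 x) (read2 y) = 2"
  have "length x = length y" using assms(3,4) by simp
  then obtain u v a b t where "a \<noteq> b" and "t \<ge> 1"
    and x: "x = u @ alt t a b @ v" and y: "y = u @ alt t b a @ v"
    using \<open>x \<noteq> y\<close> \<open>hamming (read2 x) (read2 y) = 2\<close> by (rule hamming_read2_eq_2E)
  obtain k where "t = Suc k" using \<open>t \<ge> 1\<close> by (cases t) simp_all
  then have "a \<in> set x" and "b \<in> set y" by (simp_all add: x y alt_Suc)
  with assms(5,6) have "a < q" and "b < q" by auto
  moreover have "set u \<subseteq> {0..<q}" and "set v \<subseteq> {0..<q}"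
    using assms(5) by (simp_all add: x)
  ultimately show "\<exists>u v a b t. set u \<subseteq> {0..<q} \<and> set v \<subseteq> {0..<q} \<and>
       a < q \<and> b < q \<and> a \<noteq> b \<and> t \<ge> 1 \<and>
       x = u @ alt t a b @ v \<and> y = u @ alt t b a @ v"
    using \<open>a \<noteq> b\<close> \<open>t \<ge> 1\<close> x y by blast
next
  assume "\<exists>u v a b t. set u \<subseteq> {0..<q} \<and> set v \<subseteq> {0..<q} \<and>
       a < q \<and> b < q \<and> a \<noteq> b \<and> t \<ge> 1 \<and>
       x = u @ alt t a b @ v \<and> y = u @ alt t b a @ v"
  then obtain u v a b t where "a \<noteq> b" and "t \<ge> 1"
    and "x = u @ alt t a b @ v" and "y = u @ alt t b a @ v"
    by (elim exE conjE)
  then show "hamming (read2 x) (read2 y) = 2"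
    by (simp add: hamming_read2_swap_alt)
qed

end
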